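(* Let $G$ be a finite group with identity $e$, $R[G]$ its real group algebra, $S=\{x\in R[G]:\sum_gx_g=1,\ x_g\ge0\ \forall g\}$, and let $(p^{[n]}(t))_{n\in\mathbb N}$, $p^{[n]}(t)=\sum_{k=0}^\infty a_k^{[n]}t^k$, be any sequence of real power series with $\sum_k|a_k^{[n]}|<\infty$ for each $n$ and $\lim_{n\to\infty}\sup\{|a_k^{[n]}|:k\ge1\}=0$. Then for every $x\in S$, either neither of the limits $\lim_{n\to\infty}p^{[n]}(x)$, $\lim_{n\to\infty}p^{[n]}(xc_x)$ exists, or both exist and $\lim_{n\to\infty}p^{[n]}(x)=\lim_{n\to\infty}p^{[n]}(xc_x)$.
   Context: For $y\in S$, $p^{[n]}(y)=a_0^{[n]}e+\sum_{k\ge1}a_k^{[n]}y^k$ (convergent); Euclidean topology on $R[G]$. $\mathrm{Supp}(y)=\{g:y_g\ne0\}$; for $x\in S$, $n_x=\min\{k\ge1:(x^k)_e\ne0\}$, $G_x$ is the subgroup generated by $\mathrm{Supp}(x^{n_x})$, and $c_x=\frac1{|G_x|}\sum_{g\in G_x}g$. *)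

theory Defs
  imports "HOL-Analysis.Analysis"
begin

text \<open>The finite group G is a type of class finite and group_add (a possibly
non-commutative group, written additively: identity 0, product +, inverse uminus).
Elements of the real group algebra R[G] are functions G \<Rightarrow> real (coefficient vectors).\<close>

definition gdelta :: "'g::group_add \<Rightarrow> 'g \<Rightarrow> real" where
  "gdelta h = (\<lambda>g. if g = h then 1 else 0)"

definition gconv :: "('g::{finite,group_add} \<Rightarrow> real) \<Rightarrow> ('g \<Rightarrow> real) \<Rightarrow> ('g \<Rightarrow> real)" where
  "gconv x y = (\<lambda>g. \<Sum>h\<in>UNIV. x h * y (- h + g))"

fun gpow :: "('g::{finite,group_add} \<Rightarrow> real) \<Rightarrow> nat \<Rightarrow> ('g \<Rightarrow> real)" where
  "gpow x 0 = gdelta 0"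
| "gpow x (Suc k) = gconv x (gpow x k)"

definition prob_simplex :: "('g::finite \<Rightarrow> real) set" where
  "prob_simplex = {x. (\<Sum>g\<in>UNIV. x g) = 1 \<and> (\<forall>g. x g \<ge> 0)}"

definition supp :: "('g \<Rightarrow> real) \<Rightarrow> 'g set" where
  "supp y = {g. y g \<noteq> 0}"

definition is_subgroup :: "'g::group_add set \<Rightarrow> bool" where
  "is_subgroup H \<longleftrightarrow> 0 \<in> H \<and> (\<forall>a\<in>H. \<forall>b\<in>H. a + b \<in> H) \<and> (\<forall>a\<in>H. - a \<in> H)"

definition gen_subgroup :: "'g::group_add set \<Rightarrow> 'g set" where
  "gen_subgroup A = \<Inter>{H. is_subgroup H \<and> A \<subseteq> H}"

definition n_of :: "('g::{finite,group_add} \<Rightarrow> real) \<Rightarrow> nat" where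
  "n_of x = (LEAST k. k \<ge> 1 \<and> gpow x k 0 \<noteq> 0)"

definition G_of :: "('g::{finite,group_add} \<Rightarrow> real) \<Rightarrow> 'g set" where
  "G_of x = gen_subgroup (supp (gpow x (n_of x)))"

definition c_of :: "('g::{finite,group_add} \<Rightarrow> real) \<Rightarrow> ('g \<Rightarrow> real)" where
  "c_of x = (\<lambda>g. if g \<in> G_of x then 1 / real (card (G_of x)) else 0)"

definition pser_eval :: "(nat \<Rightarrow> real) \<Rightarrow> ('g::{finite,group_add} \<Rightarrow> real) \<Rightarrow> ('g \<Rightarrow> real)" where
  "pser_eval c y = (\<lambda>g. c 0 * gdelta 0 g + (\<Sum>k. c (Suc k) * gpow y (Suc k) g))"

text \<open>Convergence in the Euclidean topology of R[G] = R^G (componentwise).\<close>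
definition conv_to :: "(nat \<Rightarrow> ('g \<Rightarrow> real)) \<Rightarrow> ('g \<Rightarrow> real) \<Rightarrow> bool" where
  "conv_to f L \<longleftrightarrow> (\<forall>g. (\<lambda>n. f n g) \<longlonglongrightarrow> L g)"

end

(* Let H = G_x and let u = c_x be the uniform distribution on H. Since 0 lies in the
   support of y = x^(n_x), the supports of the powers of y increase and eventually equal H.
   Comparing the supports of x^M, x^(M+1) and x^(M+n_x) for such M shows aH = Ha for
   every a in supp x, so x commutes with the idempotent u and (x u)^k = x^k u. As x^M
   dominates a multiple of u, Doeblin's argument gives |x^k - x^k u|_1 <= 2 rho^(k div M)
   with rho < 1. Hence p^[n](x) - p^[n](x c_x) is bounded by sup_(k>=1) |a_k^[n]| times a
   constant, and tends to 0. *)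

theory Submission
  imports Defs
begin

lemma sum_UNIV_add_left:
  fixes f :: "'g::{finite,group_add} \<Rightarrow> 'b::comm_monoid_add"
  shows "(\<Sum>k\<in>UNIV. f (h + k)) = (\<Sum>k\<in>UNIV. f k)"
  by (rule sum.reindex_bij_witness[where i="\<lambda>k. -h + k" and j="\<lambda>k. h + k"])
     (auto simp: add.assoc[symmetric])

lemma sum_UNIV_minus_add:
  fixes f :: "'g::{finite,group_add} \<Rightarrow> 'b::comm_monoid_add"
  shows "(\<Sum>k\<in>UNIV. f (- k + g)) = (\<Sum>k\<in>UNIV. f k)"
  by (rule sum.reindex_bij_witness[where i="\<lambda>k. g + - k" and j="\<lambda>k. - k + g"])
     (auto simp: add.assoc[symmetric] minus_add)

subsection \<open>The group algebra\<close>

lemma gconv_assoc: "gconv (gconv u v) w = gconv u (gconv v w)"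
proof
  fix g
  have "gconv (gconv u v) w g = (\<Sum>m\<in>UNIV. \<Sum>h\<in>UNIV. u h * v (-h + m) * w (-m + g))"
    by (simp add: gconv_def sum_distrib_right)
  also have "\<dots> = (\<Sum>h\<in>UNIV. \<Sum>m\<in>UNIV. u h * v (-h + m) * w (-m + g))"
    by (rule sum.swap)
  also have "\<dots> = (\<Sum>h\<in>UNIV. \<Sum>k\<in>UNIV. u h * v (-h + (h + k)) * w (-(h + k) + g))"
    by (rule sum.cong[OF refl], rule sum_UNIV_add_left[symmetric])
  also have "\<dots> = gconv u (gconv v w) g"
    by (simp add: gconv_def sum_distrib_left add.assoc[symmetric] minus_add mult.assoc)
  finally show "gconv (gconv u v) w g = gconv u (gconv v w) g" .
qed

lemma gconv_diff_left: "gconv (\<lambda>g. u g - v g) w = (\<lambda>g. gconv u w g - gconv v w g)"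
  by (auto simp: gconv_def left_diff_distrib sum_subtractf)

lemma gconv_diff_right: "gconv w (\<lambda>g. u g - v g) = (\<lambda>g. gconv w u g - gconv w v g)"
  by (auto simp: gconv_def right_diff_distrib sum_subtractf)

lemma gconv_scale_right: "gconv w (\<lambda>g. t * u g) = (\<lambda>g. t * gconv w u g)"
  by (auto simp: gconv_def sum_distrib_left mult.left_commute)

lemma gconv_gdelta_left [simp]: "gconv (gdelta 0) y = y"
proof
  fix g
  have "gconv (gdelta 0) y g = (\<Sum>h\<in>UNIV. if h = 0 then y (-h + g) else 0)"
    unfolding gconv_def gdelta_def by (rule sum.cong) auto
  then show "gconv (gdelta 0) y g = y g" by simp
qed

lemma gconv_gdelta_right [simp]: "gconv y (gdelta 0) = y"
proof
  fix g
  have "gconv y (gdelta 0) g = (\<Sum>h\<in>UNIV. if h = g then y h else 0)"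
    unfolding gconv_def gdelta_def
    by (rule sum.cong) (auto, metis add_minus_cancel add.right_neutral)
  then show "gconv y (gdelta 0) g = y g" by simp
qed

lemma gpow_add: "gpow x (m + k) = gconv (gpow x m) (gpow x k)"
  by (induction m) (simp_all add: gconv_assoc)

lemma gpow_mult: "gpow x (m * k) = gpow (gpow x m) k"
  by (induction k) (simp_all add: gpow_add)

lemma gconv_commute_gpow:
  assumes "gconv x c = gconv c x" shows "gconv c (gpow x k) = gconv (gpow x k) c"
proof (induction k)
  case (Suc k)
  have "gconv c (gpow x (Suc k)) = gconv (gconv x c) (gpow x k)"
    by (simp only: gpow.simps assms gconv_assoc[symmetric])
  also have "\<dots> = gconv (gpow x (Suc k)) c"
    by (simp only: gpow.simps gconv_assoc Suc)
  finally show ?case .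
qed simp

lemma gpow_gconv_commuting_idempotent:
  assumes comm: "gconv x c = gconv c x" and idem: "gconv c c = c"
  shows "gpow (gconv x c) (Suc k) = gconv (gpow x (Suc k)) c"
proof (induction k)
  case 0
  show ?case by simp
next
  case (Suc k)
  have "gpow (gconv x c) (Suc (Suc k)) = gconv x (gconv (gconv c (gpow x (Suc k))) c)"
    by (simp only: gpow.simps(2)[of "gconv x c" "Suc k"] Suc gconv_assoc)
  also have "\<dots> = gconv (gpow x (Suc (Suc k))) c"
    by (simp only: gconv_commute_gpow[OF comm] gpow.simps(2)[of x "Suc k"] gconv_assoc idem)
  finally show ?case .
qed

definition l1_norm :: "('g::finite \<Rightarrow> real) \<Rightarrow> real" where
  "l1_norm v = (\<Sum>g\<in>UNIV. \<bar>v g\<bar>)"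

lemma abs_le_l1_norm: "\<bar>v g\<bar> \<le> l1_norm v"
  unfolding l1_norm_def by (rule member_le_sum) auto

lemma l1_norm_diff_le: "l1_norm (\<lambda>g. u g - v g) \<le> l1_norm u + l1_norm v"
  unfolding l1_norm_def by (simp add: sum.distrib[symmetric] sum_mono abs_triangle_ineq4)

lemma l1_norm_gconv_le: "l1_norm (gconv u v) \<le> l1_norm u * l1_norm v"
proof -
  have "l1_norm (gconv u v) \<le> (\<Sum>g\<in>UNIV. \<Sum>h\<in>UNIV. \<bar>u h\<bar> * \<bar>v (-h + g)\<bar>)"
    unfolding l1_norm_def gconv_def
    by (rule sum_mono) (rule order_trans[OF sum_abs], simp add: abs_mult)
  also have "\<dots> = (\<Sum>h\<in>UNIV. \<bar>u h\<bar> * (\<Sum>g\<in>UNIV. \<bar>v (-h + g)\<bar>))"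
    by (subst sum.swap) (simp add: sum_distrib_left)
  also have "\<dots> = l1_norm u * l1_norm v"
    by (simp add: l1_norm_def sum_distrib_right sum_UNIV_add_left[where f="\<lambda>g. \<bar>v g\<bar>"])
  finally show ?thesis .
qed

lemma prob_simplex_nonneg: "u \<in> prob_simplex \<Longrightarrow> 0 \<le> u g"
  unfolding prob_simplex_def by auto

lemma prob_simplex_le_1:
  assumes "u \<in> prob_simplex" shows "u g \<le> 1"
proof -
  have "u g \<le> (\<Sum>h\<in>UNIV. u h)"
    by (rule member_le_sum) (auto simp: prob_simplex_nonneg[OF assms])
  then show ?thesis using assms unfolding prob_simplex_def by auto
qed

lemma l1_norm_prob_simplex: "u \<in> prob_simplex \<Longrightarrow> l1_norm u = 1"
  unfolding l1_norm_def prob_simplex_def by auto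

lemma prob_simplex_supp_nonempty: "u \<in> prob_simplex \<Longrightarrow> supp u \<noteq> {}"
  using sum.neutral[of UNIV u] unfolding prob_simplex_def supp_def by force

lemma gconv_nonneg: "(\<And>g. 0 \<le> u g) \<Longrightarrow> (\<And>g. 0 \<le> v g) \<Longrightarrow> 0 \<le> gconv u v g"
  unfolding gconv_def by (auto intro!: sum_nonneg)

lemma sum_gconv: "(\<Sum>g\<in>UNIV. gconv u v g) = (\<Sum>g\<in>UNIV. u g) * (\<Sum>g\<in>UNIV. v g)"
proof -
  have "(\<Sum>g\<in>UNIV. gconv u v g) = (\<Sum>h\<in>UNIV. u h * (\<Sum>g\<in>UNIV. v (-h + g)))"
    unfolding gconv_def by (subst sum.swap) (simp add: sum_distrib_left)
  then show ?thesis by (simp add: sum_UNIV_add_left sum_distrib_right)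
qed

lemma gconv_prob_simplex: "u \<in> prob_simplex \<Longrightarrow> v \<in> prob_simplex \<Longrightarrow> gconv u v \<in> prob_simplex"
  unfolding prob_simplex_def by (auto simp: sum_gconv intro!: gconv_nonneg)

lemma gpow_prob_simplex: "x \<in> prob_simplex \<Longrightarrow> gpow x k \<in> prob_simplex"
proof (induction k)
  case 0
  show ?case by (auto simp: prob_simplex_def gdelta_def)
qed (simp add: gconv_prob_simplex)

lemma supp_gconv_subset: "supp (gconv u v) \<subseteq> {a + b |a b. a \<in> supp u \<and> b \<in> supp v}"
proof
  fix g assume g: "g \<in> supp (gconv u v)"
  show "g \<in> {a + b |a b. a \<in> supp u \<and> b \<in> supp v}"
  proof (rule ccontr)
    assume "g \<notin> {a + b |a b. a \<in> supp u \<and> b \<in> supp v}"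
    then have "u h * v (-h + g) = 0" for h
      by (auto simp: supp_def)
    then have "gconv u v g = 0" unfolding gconv_def by (intro sum.neutral) blast
    then show False using g by (simp add: supp_def)
  qed
qed

lemma add_mem_supp_gconv:
  assumes "\<And>g. 0 \<le> u g" "\<And>g. 0 \<le> v g" "a \<in> supp u" "b \<in> supp v"
  shows "a + b \<in> supp (gconv u v)"
proof -
  have "u a * v b \<le> (\<Sum>h\<in>UNIV. u h * v (-h + (a + b)))"
    using member_le_sum[of a UNIV "\<lambda>h. u h * v (-h + (a + b))"] assms(1,2)
    by (simp add: add.assoc[symmetric])
  moreover have "u a * v b > 0" using assms by (auto simp: supp_def less_le)
  ultimately show ?thesis by (auto simp: supp_def gconv_def)
qed

lemma add_mem_supp_gpow:
  assumes "x \<in> prob_simplex" "a \<in> supp (gpow x i)" "b \<in> supp (gpow x j)"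
  shows "a + b \<in> supp (gpow x (i + j))"
  unfolding gpow_add using assms
  by (intro add_mem_supp_gconv) (auto simp: prob_simplex_nonneg gpow_prob_simplex)

lemma is_subgroup_gen_subgroup: "is_subgroup (gen_subgroup A)"
  unfolding is_subgroup_def gen_subgroup_def by auto

lemma gen_subgroup_superset: "A \<subseteq> gen_subgroup A"
  unfolding gen_subgroup_def by auto

lemma gen_subgroup_least: "is_subgroup K \<Longrightarrow> A \<subseteq> K \<Longrightarrow> gen_subgroup A \<subseteq> K"
  unfolding gen_subgroup_def by auto

lemma subgroup_minus_add_mem_iff:
  assumes "is_subgroup H" "h \<in> H" shows "- h + g \<in> H \<longleftrightarrow> g \<in> H"
  using assms unfolding is_subgroup_def by (metis add_minus_cancel)

lemma subgroup_add_mem_iff: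
  assumes "is_subgroup H" "k \<in> H" shows "g + k \<in> H \<longleftrightarrow> g \<in> H"
proof
  assume "g + k \<in> H"
  then have "g + k + - k \<in> H" using assms unfolding is_subgroup_def by blast
  then show "g \<in> H" by (simp add: add.assoc)
next
  assume "g \<in> H"
  then show "g + k \<in> H" using assms unfolding is_subgroup_def by blast
qed

lemma is_subgroup_if_add_closed:
  fixes K :: "'g::{finite,group_add} set"
  assumes ne: "K \<noteq> {}" and closed: "\<And>a b. a \<in> K \<Longrightarrow> b \<in> K \<Longrightarrow> a + b \<in> K"
  shows "is_subgroup K"
proof -
  have translate: "(+) a ` K = K" if "a \<in> K" for a
    by (rule card_subset_eq) (use closed that in \<open>auto simp: card_image\<close>)
  obtain a where "a \<in> K" using ne by blast
  then obtain b where "b \<in> K" "a + b = a" using translate by (metis imageE)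
  then have zero: "0 \<in> K" by (metis add_left_imp_eq add.right_neutral)
  have "- a \<in> K" if "a \<in> K" for a
    using translate[OF that] zero by (metis imageE minus_unique)
  then show ?thesis using zero closed unfolding is_subgroup_def by blast
qed

lemma supp_gpow_subset_subgroup:
  assumes "is_subgroup H" "supp x \<subseteq> H" shows "supp (gpow x k) \<subseteq> H"
proof (induction k)
  case 0
  show ?case using assms(1) by (auto simp: supp_def gdelta_def is_subgroup_def)
next
  case (Suc k)
  show ?case using supp_gconv_subset[of x "gpow x k"] Suc assms
    unfolding is_subgroup_def gpow.simps by blast
qed

subsection \<open>Uniform distributions on subgroups\<close>

definition uniform_on :: "'g::finite set \<Rightarrow> 'g \<Rightarrow> real" where
  "uniform_on H = (\<lambda>g. if g \<in> H then 1 / real (card H) else 0)"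

lemma c_of_eq_uniform_on: "c_of x = uniform_on (G_of x)"
  unfolding c_of_def uniform_on_def by simp

lemma supp_uniform_on: "supp (uniform_on H) = H"
  by (auto simp: supp_def uniform_on_def card_gt_0_iff)

lemma uniform_on_prob_simplex:
  assumes "H \<noteq> {}" shows "uniform_on H \<in> prob_simplex"
  using assms by (auto simp: prob_simplex_def uniform_on_def sum.If_cases)

lemma c_of_prob_simplex: "c_of x \<in> prob_simplex"
  unfolding c_of_eq_uniform_on G_of_def
  using is_subgroup_gen_subgroup[of "supp (gpow x (n_of x))"]
  by (intro uniform_on_prob_simplex) (auto simp: is_subgroup_def)

lemma gconv_uniform_on_absorb_right:
  assumes H: "is_subgroup H" and z: "z \<in> prob_simplex" and supp_z: "supp z \<subseteq> H"
  shows "gconv z (uniform_on H) = uniform_on H"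
proof
  fix g
  have translate: "z h * uniform_on H (- h + g) = z h * uniform_on H g" for h
    using subgroup_minus_add_mem_iff[OF H, of h g] supp_z
    by (cases "z h = 0") (auto simp: uniform_on_def supp_def)
  have "gconv z (uniform_on H) g = (\<Sum>h\<in>UNIV. z h) * uniform_on H g"
    by (simp only: gconv_def translate sum_distrib_right)
  then show "gconv z (uniform_on H) g = uniform_on H g"
    using z by (simp add: prob_simplex_def)
qed

lemma gconv_uniform_on_absorb_left:
  assumes H: "is_subgroup H" and z: "z \<in> prob_simplex" and supp_z: "supp z \<subseteq> H"
  shows "gconv (uniform_on H) z = uniform_on H"
proof
  fix g
  have translate: "uniform_on H h * z (- h + g) = uniform_on H g * z (- h + g)" for h
  proof (cases "z (- h + g) = 0")
    case False
    then have "- h + g \<in> H" using supp_z by (auto simp: supp_def)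
    then have "h \<in> H \<longleftrightarrow> h + (- h + g) \<in> H"
      by (rule subgroup_add_mem_iff[OF H, symmetric])
    then have "h \<in> H \<longleftrightarrow> g \<in> H"
      by (simp add: add.assoc[symmetric])
    then show ?thesis by (simp add: uniform_on_def)
  qed simp
  have "gconv (uniform_on H) z g = uniform_on H g * (\<Sum>h\<in>UNIV. z (- h + g))"
    by (simp only: gconv_def translate sum_distrib_left)
  then show "gconv (uniform_on H) z g = uniform_on H g"
    using z by (simp add: sum_UNIV_minus_add prob_simplex_def)
qed

lemma uniform_on_idempotent:
  assumes "is_subgroup H" shows "gconv (uniform_on H) (uniform_on H) = uniform_on H"
  using assms by (intro gconv_uniform_on_absorb_left)
    (auto simp: supp_uniform_on is_subgroup_def intro!: uniform_on_prob_simplex)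

lemma gconv_uniform_on_commute:
  assumes cosets: "\<And>a. a \<in> supp x \<Longrightarrow> (+) a ` H = (\<lambda>h. h + a) ` H"
  shows "gconv x (uniform_on H) = gconv (uniform_on H) x"
proof
  fix g
  have reflect: "x h * uniform_on H (- h + g) = uniform_on H (g + - h) * x h" for h
  proof (cases "h \<in> supp x")
    case True
    have "- h + g \<in> H \<longleftrightarrow> g \<in> (+) h ` H"
      by (auto simp: image_iff add.assoc[symmetric]) (metis add_minus_cancel)
    also have "\<dots> \<longleftrightarrow> g + - h \<in> H"
      unfolding cosets[OF True]
      by (auto simp: image_iff add.assoc) (metis diff_add_cancel diff_conv_add_uminus)
    finally show ?thesis by (simp add: uniform_on_def)
  qed (simp add: supp_def)
  have "gconv x (uniform_on H) g = (\<Sum>h\<in>UNIV. uniform_on H (g + - h) * x h)"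
    by (simp only: gconv_def reflect)
  also have "\<dots> = gconv (uniform_on H) x g"
    unfolding gconv_def
    by (rule sum.reindex_bij_witness[where i="\<lambda>h. - h + g" and j="\<lambda>h. g + - h"])
       (auto simp: minus_add add.assoc[symmetric])
  finally show "gconv x (uniform_on H) g = gconv (uniform_on H) x g" .
qed

subsection \<open>Supports of powers\<close>

lemma exists_funpow_add_eq_0:
  fixes a :: "'g::{finite,group_add}"
  shows "\<exists>d\<ge>1. ((+) a ^^ d) 0 = 0"
proof -
  define f where "f k = ((+) a ^^ k) 0" for k
  have shift: "((+) a ^^ d) w = f d + w" for d w
    unfolding f_def by (induction d) (simp_all add: add.assoc)
  have "\<not> inj f"
    using finite_imageD[of f UNIV] by auto
  then obtain i j where "i < j" "f i = f j"
    unfolding inj_def by (metis linorder_neqE_nat)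
  have "f j = ((+) a ^^ (j - i)) (f i)"
    using \<open>i < j\<close> funpow_add[of "j - i" i "(+) a"] by (simp add: f_def)
  then have "f (j - i) + f j = f j"
    using \<open>f i = f j\<close> shift by simp
  then have "f (j - i) = 0" by (metis add.left_neutral add_right_cancel)
  then show ?thesis using \<open>i < j\<close> by (intro exI[of _ "j - i"]) (simp add: f_def)
qed

lemma n_of_spec:
  assumes x: "x \<in> prob_simplex"
  shows "n_of x \<ge> 1" and "0 \<in> supp (gpow x (n_of x))"
proof -
  obtain a where a: "a \<in> supp x" using prob_simplex_supp_nonempty[OF x] by blast
  have powers: "((+) a ^^ k) 0 \<in> supp (gpow x k)" for k
  proof (induction k)
    case 0
    show ?case by (simp add: supp_def gdelta_def)
  next
    case (Suc k)
    show ?case using add_mem_supp_gpow[OF x _ Suc, of a 1] a by simp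
  qed
  obtain d where "d \<ge> 1" "((+) a ^^ d) 0 = 0" using exists_funpow_add_eq_0 by blast
  then have "\<exists>k. k \<ge> 1 \<and> gpow x k 0 \<noteq> 0" using powers[of d] by (auto simp: supp_def)
  from LeastI_ex[OF this] show "n_of x \<ge> 1" "0 \<in> supp (gpow x (n_of x))"
    unfolding n_of_def supp_def by auto
qed

text \<open>With \<open>0 \<in> supp y\<close> the supports of the powers of \<open>y\<close> increase; their union is closed
  under addition, hence a subgroup, and it is reached after finitely many steps.\<close>
lemma supp_gpow_eventually_gen_subgroup:
  fixes y :: "'g::{finite,group_add} \<Rightarrow> real"
  assumes y: "y \<in> prob_simplex" and zero: "0 \<in> supp y"
  shows "\<exists>J. \<forall>j\<ge>J. supp (gpow y j) = gen_subgroup (supp y)"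
proof -
  define A where "A j = supp (gpow y j)" for j
  define K where "K = \<Union> (range A)"
  have "0 \<in> supp (gpow y 1)" using zero by simp
  then have "A j \<subseteq> A (Suc j)" for j
    using add_mem_supp_gpow[OF y, of _ j 0 1] by (auto simp: A_def)
  then have mono: "incseq A" by (rule incseq_SucI)
  then have "A i \<subseteq> A j \<or> A j \<subseteq> A i" for i j
    by (metis incseq_def nat_le_linear)
  then have "subset.chain UNIV (range A)"
    by (auto simp: subset.chain_def)
  then obtain J where J: "K \<subseteq> A J"
    using finite_subset_Union_chain[of K "range A" UNIV] by (auto simp: K_def)
  have "A 0 \<noteq> {}" by (simp add: A_def supp_def gdelta_def)
  moreover have "a + b \<in> K" if "a \<in> K" "b \<in> K" for a b
    using that add_mem_supp_gpow[OF y] unfolding K_def A_def by blast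
  ultimately have "is_subgroup K" by (intro is_subgroup_if_add_closed) (auto simp: K_def)
  moreover have "supp y = A 1" by (simp add: A_def)
  then have "supp y \<subseteq> K" by (auto simp: K_def)
  ultimately have "gen_subgroup (supp y) \<subseteq> K" by (rule gen_subgroup_least)
  moreover have "K \<subseteq> gen_subgroup (supp y)"
    using supp_gpow_subset_subgroup[OF is_subgroup_gen_subgroup gen_subgroup_superset]
    by (auto simp: K_def A_def)
  moreover have "A j = K" if "j \<ge> J" for j
    using J mono that by (auto simp: incseq_def K_def)
  ultimately show ?thesis by (auto simp: A_def)
qed

lemma left_coset_eq_right_coset:
  fixes x :: "'g::{finite,group_add} \<Rightarrow> real"
  assumes x: "x \<in> prob_simplex" and m: "supp (gpow x m) = H" and m': "supp (gpow x m') = H"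
    and "m < m'" and a: "a \<in> supp x"
  shows "(+) a ` H = (\<lambda>h. h + a) ` H"
proof -
  define L where "L = supp (gpow x (Suc m))"
  obtain b where b: "b \<in> supp (gpow x (m' - Suc m))"
    using prob_simplex_supp_nonempty[OF gpow_prob_simplex[OF x]] by blast
  have "(\<lambda>l. l + b) ` L \<subseteq> H"
    using add_mem_supp_gpow[OF x _ b, of _ "Suc m"] \<open>m < m'\<close> m' by (auto simp: L_def)
  then have card_L: "card L \<le> card H"
    by (metis card_image card_mono finite inj_on_add')
  have left: "(+) a ` H \<subseteq> L"
    using add_mem_supp_gpow[OF x, of a 1 _ m] a m by (auto simp: L_def)
  have right: "(\<lambda>h. h + a) ` H \<subseteq> L"
    using add_mem_supp_gpow[OF x, of _ m a 1] a m by (auto simp: L_def)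
  have "(+) a ` H = L"
    using card_L by (intro card_seteq[OF _ left]) (auto simp: card_image)
  moreover have "(\<lambda>h. h + a) ` H = L"
    using card_L by (intro card_seteq[OF _ right]) (auto simp: card_image)
  ultimately show ?thesis by simp
qed

subsection \<open>Convergence of powers to the uniform distribution\<close>

text \<open>Doeblin's argument: \<open>z \<ge> \<theta> u\<close> for \<open>u = uniform_on H\<close>, and since \<open>u\<close> absorbs \<open>z\<close>, the
  difference \<open>z\<^sup>q - u\<close> is multiplied by the sub-probability vector \<open>z - \<theta> u\<close> at each step.\<close>
lemma l1_norm_gpow_sub_uniform_on_le:
  fixes z :: "'g::{finite,group_add} \<Rightarrow> real"
  assumes z: "z \<in> prob_simplex" and H: "is_subgroup H" and supp_z: "supp z = H"
  shows "\<exists>\<rho>. 0 < \<rho> \<and> \<rho> < 1 \<and> (\<forall>q. l1_norm (\<lambda>g. gpow z q g - uniform_on H g) \<le> 2 * \<rho> ^ q)"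
proof -
  let ?u = "uniform_on H"
  have "H \<noteq> {}" using H by (auto simp: is_subgroup_def)
  have u: "?u \<in> prob_simplex" by (rule uniform_on_prob_simplex) fact
  define m where "m = Min (z ` H)"
  have "m > 0"
    unfolding m_def using \<open>H \<noteq> {}\<close> supp_z
    by (subst Min_gr_iff) (auto simp: supp_def less_le prob_simplex_nonneg[OF z])
  define \<theta> where "\<theta> = min (m * real (card H)) (1 / 2)"
  have \<theta>: "0 < \<theta>" "\<theta> < 1"
    using \<open>m > 0\<close> \<open>H \<noteq> {}\<close> by (auto simp: \<theta>_def card_gt_0_iff)
  define w where "w = (\<lambda>g. z g - \<theta> * ?u g)"
  have "\<theta> * ?u g \<le> z g" for g
  proof (cases "g \<in> H")
    case True
    have "\<theta> \<le> m * real (card H)" by (simp add: \<theta>_def)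
    then have "\<theta> * ?u g \<le> m" using \<open>H \<noteq> {}\<close> True
      by (simp add: uniform_on_def card_gt_0_iff pos_divide_le_eq)
    also have "m \<le> z g" using True by (simp add: m_def)
    finally show ?thesis .
  qed (simp add: uniform_on_def prob_simplex_nonneg[OF z])
  then have "l1_norm w = 1 - \<theta>"
    using z u
    by (simp add: l1_norm_def w_def sum_subtractf sum_distrib_left[symmetric] prob_simplex_def)
  define D where "D q = (\<lambda>g. gpow z q g - ?u g)" for q
  have "gconv (D q) w = D (Suc q)" for q
  proof -
    have "gconv (gpow z q) ?u = ?u"
      by (rule gconv_uniform_on_absorb_right[OF H gpow_prob_simplex[OF z]])
         (rule supp_gpow_subset_subgroup[OF H], simp add: supp_z)
    moreover have "gconv ?u z = ?u"
      by (rule gconv_uniform_on_absorb_left[OF H z]) (simp add: supp_z)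
    ultimately show ?thesis
      using gpow_add[of z q 1]
      by (simp add: D_def w_def gconv_diff_left gconv_diff_right gconv_scale_right
          uniform_on_idempotent[OF H])
  qed
  then have "l1_norm (D q) \<le> 2 * (1 - \<theta>) ^ q" for q
  proof (induction q)
    case 0
    show ?case
      using l1_norm_diff_le[of "gdelta 0" ?u] l1_norm_prob_simplex[OF u]
        l1_norm_prob_simplex[OF gpow_prob_simplex[OF z, of 0]]
      by (simp add: D_def)
  next
    case (Suc q)
    have "l1_norm (D (Suc q)) \<le> l1_norm (D q) * (1 - \<theta>)"
      using l1_norm_gconv_le[of "D q" w] Suc.prems \<open>l1_norm w = 1 - \<theta>\<close> by simp
    also have "\<dots> \<le> 2 * (1 - \<theta>) ^ Suc q"
      using Suc \<theta> by (simp add: mult_right_mono)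
    finally show ?case .
  qed
  then show ?thesis using \<theta> by (intro exI[of _ "1 - \<theta>"]) (simp add: D_def)
qed

lemma l1_norm_gpow_sub_gconv_uniform_on_le:
  fixes x :: "'g::{finite,group_add} \<Rightarrow> real"
  assumes x: "x \<in> prob_simplex" and H: "is_subgroup H" and supp_M: "supp (gpow x M) = H"
  shows "\<exists>\<rho>. 0 < \<rho> \<and> \<rho> < 1 \<and>
    (\<forall>k. l1_norm (\<lambda>g. gpow x k g - gconv (gpow x k) (uniform_on H) g) \<le> 2 * \<rho> ^ (k div M))"
proof -
  let ?u = "uniform_on H" and ?z = "gpow x M"
  obtain \<rho> where \<rho>: "0 < \<rho>" "\<rho> < 1"
    and decay: "\<And>q. l1_norm (\<lambda>g. gpow ?z q g - ?u g) \<le> 2 * \<rho> ^ q"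
    using l1_norm_gpow_sub_uniform_on_le[OF gpow_prob_simplex[OF x] H supp_M] by blast
  have "l1_norm (\<lambda>g. gpow x k g - gconv (gpow x k) ?u g) \<le> 2 * \<rho> ^ (k div M)" for k
  proof -
    define q where "q = k div M"
    have k: "gpow x k = gconv (gpow x (k mod M)) (gpow ?z q)"
      using gpow_add[of x "k mod M" "M * q"] by (simp add: q_def gpow_mult)
    have "gconv (gpow ?z q) ?u = ?u"
      using supp_gpow_subset_subgroup[OF H, of ?z q] supp_M
      by (intro gconv_uniform_on_absorb_right[OF H])
        (simp_all add: gpow_prob_simplex[OF gpow_prob_simplex[OF x]])
    then have "(\<lambda>g. gpow x k g - gconv (gpow x k) ?u g) =
        gconv (gpow x (k mod M)) (\<lambda>g. gpow ?z q g - ?u g)"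
      by (simp add: k gconv_diff_right gconv_assoc)
    then have "l1_norm (\<lambda>g. gpow x k g - gconv (gpow x k) ?u g) \<le>
        l1_norm (gpow x (k mod M)) * l1_norm (\<lambda>g. gpow ?z q g - ?u g)"
      by (simp add: l1_norm_gconv_le)
    also have "\<dots> \<le> 2 * \<rho> ^ q"
      using decay by (simp add: l1_norm_prob_simplex gpow_prob_simplex[OF x])
    finally show ?thesis by (simp add: q_def)
  qed
  then show ?thesis using \<rho> by blast
qed

lemma summable_power_div:
  fixes \<rho> :: real
  assumes "0 < \<rho>" "\<rho> < 1" "M \<ge> 1"
  shows "summable (\<lambda>k. \<rho> ^ (k div M))"
proof -
  define \<sigma> where "\<sigma> = root M \<rho>"
  have \<sigma>: "0 < \<sigma>" "\<sigma> < 1" "\<sigma> ^ M = \<rho>"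
    using assms by (auto simp: \<sigma>_def real_root_lt_1_iff real_root_pow_pos)
  have "\<rho> * \<rho> ^ (k div M) \<le> \<sigma> ^ k" for k
  proof -
    have "k < M + M * (k div M)"
      using assms(3) by (intro dividend_less_times_div) simp
    then have "\<sigma> ^ (M + M * (k div M)) \<le> \<sigma> ^ k"
      using \<sigma> by (simp add: power_decreasing)
    then show ?thesis by (simp add: power_add power_mult \<sigma>(3))
  qed
  then have "norm (\<rho> ^ (k div M)) \<le> \<sigma> ^ k / \<rho>" for k
    using assms(1) by (simp add: pos_le_divide_eq mult.commute)
  moreover have "summable (\<lambda>k. \<sigma> ^ k / \<rho>)"
    using \<sigma> by (intro summable_divide summable_geometric) simp
  ultimately show ?thesis
    by (rule summable_comparison_test'[rotated])
qed

lemma gpow_sub_gpow_gconv_c_of_summable_bound: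
  fixes x :: "'g::{finite,group_add} \<Rightarrow> real"
  assumes x: "x \<in> prob_simplex"
  shows "\<exists>E. summable E \<and>
    (\<forall>k g. \<bar>gpow x (Suc k) g - gpow (gconv x (c_of x)) (Suc k) g\<bar> \<le> E k)"
proof -
  define n where "n = n_of x"
  define H where "H = G_of x"
  let ?u = "uniform_on H"
  have n: "n \<ge> 1" "0 \<in> supp (gpow x n)" using n_of_spec[OF x] by (simp_all add: n_def)
  have H: "is_subgroup H" by (simp add: H_def G_of_def is_subgroup_gen_subgroup)
  obtain J where J: "\<And>j. j \<ge> J \<Longrightarrow> supp (gpow x (n * j)) = H"
    using supp_gpow_eventually_gen_subgroup[OF gpow_prob_simplex[OF x] n(2)]
    by (auto simp: gpow_mult H_def G_of_def n_def)
  define M where "M = n * Suc J"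
  have M: "M \<ge> 1" "supp (gpow x M) = H" "supp (gpow x (M + n)) = H"
    using n J[of "Suc J"] J[of "Suc (Suc J)"] by (simp_all add: M_def add.commute)
  have "(+) a ` H = (\<lambda>h. h + a) ` H" if "a \<in> supp x" for a
    using left_coset_eq_right_coset[OF x M(2) M(3) _ that] n by simp
  then have "gconv x ?u = gconv ?u x" by (rule gconv_uniform_on_commute)
  then have powers: "gpow (gconv x (c_of x)) (Suc k) = gconv (gpow x (Suc k)) ?u" for k
    unfolding c_of_eq_uniform_on H_def[symmetric]
    by (rule gpow_gconv_commuting_idempotent[OF _ uniform_on_idempotent[OF H]])
  obtain \<rho> where \<rho>: "0 < \<rho>" "\<rho> < 1"
    and decay: "\<And>k. l1_norm (\<lambda>g. gpow x k g - gconv (gpow x k) ?u g) \<le> 2 * \<rho> ^ (k div M)"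
    using l1_norm_gpow_sub_gconv_uniform_on_le[OF x H M(2)] by blast
  have "summable (\<lambda>k. 2 * \<rho> ^ (Suc k div M))"
    using summable_power_div[OF \<rho> M(1)] by (simp add: summable_Suc_iff[of "\<lambda>k. \<rho> ^ (k div M)"])
  moreover have "\<bar>gpow x (Suc k) g - gpow (gconv x (c_of x)) (Suc k) g\<bar> \<le> 2 * \<rho> ^ (Suc k div M)"
    for k g
    using order_trans[OF abs_le_l1_norm decay[of "Suc k"]] by (simp only: powers)
  ultimately show ?thesis by blast
qed

subsection \<open>Power series\<close>

lemma abs_le_Sup_abs_coeffs:
  fixes c :: "nat \<Rightarrow> real"
  assumes "summable (\<lambda>k. \<bar>c k\<bar>)" "k \<ge> 1"
  shows "\<bar>c k\<bar> \<le> Sup ((\<lambda>k. \<bar>c k\<bar>) ` {1..})"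
proof (rule cSUP_upper)
  show "bdd_above ((\<lambda>k. \<bar>c k\<bar>) ` {1..})"
    using sum_le_suminf[OF assms(1), of "{_}"] by (intro bdd_aboveI2) auto
qed (use assms(2) in auto)

lemma summable_pser_terms:
  assumes c: "summable (\<lambda>k. \<bar>c k\<bar>)" and x: "x \<in> prob_simplex"
  shows "summable (\<lambda>k. c (Suc k) * gpow x (Suc k) g)"
proof (rule summable_comparison_test'[of "\<lambda>k. \<bar>c (Suc k)\<bar>" 0])
  show "summable (\<lambda>k. \<bar>c (Suc k)\<bar>)" using c summable_Suc_iff[of "\<lambda>k. \<bar>c k\<bar>"] by simp
  show "norm (c (Suc k) * gpow x (Suc k) g) \<le> \<bar>c (Suc k)\<bar>" for k
    using prob_simplex_le_1[OF gpow_prob_simplex[OF x], of "Suc k" g]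
      prob_simplex_nonneg[OF gpow_prob_simplex[OF x], of "Suc k" g]
    by (auto simp del: gpow.simps simp: abs_mult intro!: mult_left_le)
qed

lemma pser_eval_diff_le:
  assumes c: "summable (\<lambda>k. \<bar>c k\<bar>)" and x: "x \<in> prob_simplex" and y: "y \<in> prob_simplex"
    and E: "summable E" and bound: "\<And>k. \<bar>gpow x (Suc k) g - gpow y (Suc k) g\<bar> \<le> E k"
  shows "\<bar>pser_eval c x g - pser_eval c y g\<bar> \<le> Sup ((\<lambda>k. \<bar>c k\<bar>) ` {1..}) * suminf E"
proof -
  let ?s = "Sup ((\<lambda>k. \<bar>c k\<bar>) ` {1..})"
  have "pser_eval c x g - pser_eval c y g = (\<Sum>k. c (Suc k) * (gpow x (Suc k) g - gpow y (Suc k) g))"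
    using summable_pser_terms[OF c x] summable_pser_terms[OF c y]
    by (simp add: pser_eval_def suminf_diff right_diff_distrib)
  moreover have "norm (\<Sum>k. c (Suc k) * (gpow x (Suc k) g - gpow y (Suc k) g)) \<le> (\<Sum>k. ?s * E k)"
  proof (rule norm_suminf_le)
    show "norm (c (Suc k) * (gpow x (Suc k) g - gpow y (Suc k) g)) \<le> ?s * E k" for k
      unfolding real_norm_def abs_mult using abs_le_Sup_abs_coeffs[OF c, of "Suc k"] bound[of k]
      by (intro mult_mono) auto
    show "summable (\<lambda>k. ?s * E k)" using E by (rule summable_mult)
  qed
  moreover have "(\<Sum>k. ?s * E k) = ?s * suminf E" using E by (rule suminf_mult)
  ultimately show ?thesis by simp
qed

lemma conv_to_iff_if_diff_tendsto_0:
  assumes "\<And>g. (\<lambda>n. f n g - h n g) \<longlonglongrightarrow> 0"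
  shows "conv_to f L \<longleftrightarrow> conv_to h L"
proof
  assume "conv_to f L"
  then have "(\<lambda>n. f n g - (f n g - h n g)) \<longlonglongrightarrow> L g - 0" for g
    using assms by (intro tendsto_diff) (auto simp: conv_to_def)
  then show "conv_to h L" by (simp add: conv_to_def)
next
  assume "conv_to h L"
  then have "(\<lambda>n. h n g + (f n g - h n g)) \<longlonglongrightarrow> L g + 0" for g
    using assms by (intro tendsto_add) (auto simp: conv_to_def)
  then show "conv_to f L" by (simp add: conv_to_def)
qed

theorem lemma3:
  fixes a :: "nat \<Rightarrow> nat \<Rightarrow> real" and x :: "'g::{finite,group_add} \<Rightarrow> real"
  assumes abs_summ: "\<And>n. summable (\<lambda>k. \<bar>a n k\<bar>)"
    and sup_lim: "(\<lambda>n. Sup ((\<lambda>k. \<bar>a n k\<bar>) ` {1..})) \<longlonglongrightarrow> 0"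
    and xS: "x \<in> prob_simplex"
  shows "((\<nexists>L. conv_to (\<lambda>n. pser_eval (a n) x) L) \<and>
          (\<nexists>L. conv_to (\<lambda>n. pser_eval (a n) (gconv x (c_of x))) L))
       \<or> (\<exists>L. conv_to (\<lambda>n. pser_eval (a n) x) L \<and>
              conv_to (\<lambda>n. pser_eval (a n) (gconv x (c_of x))) L)"
proof -
  let ?y = "gconv x (c_of x)"
  have yS: "?y \<in> prob_simplex" by (rule gconv_prob_simplex[OF xS c_of_prob_simplex])
  obtain E where E: "summable E" "\<And>k g. \<bar>gpow x (Suc k) g - gpow ?y (Suc k) g\<bar> \<le> E k"
    using gpow_sub_gpow_gconv_c_of_summable_bound[OF xS] by blast
  have "(\<lambda>n. pser_eval (a n) x g - pser_eval (a n) ?y g) \<longlonglongrightarrow> 0" for g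
  proof (rule Lim_null_comparison)
    show "\<forall>\<^sub>F n in sequentially. norm (pser_eval (a n) x g - pser_eval (a n) ?y g)
        \<le> Sup ((\<lambda>k. \<bar>a n k\<bar>) ` {1..}) * suminf E"
      using pser_eval_diff_le[OF abs_summ xS yS E] by simp
    show "(\<lambda>n. Sup ((\<lambda>k. \<bar>a n k\<bar>) ` {1..}) * suminf E) \<longlonglongrightarrow> 0"
      using tendsto_mult_left_zero[OF sup_lim] .
  qed
  then have "conv_to (\<lambda>n. pser_eval (a n) x) L \<longleftrightarrow> conv_to (\<lambda>n. pser_eval (a n) ?y) L" for L
    by (rule conv_to_iff_if_diff_tendsto_0)
  then show ?thesis by blast
qed

end
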